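(* Let $q$ be a prime power and $n,d$ integers with $n\ge 2d\ge 2$, and assume $(n,q)\neq(2d,2)$. Then for all $0\le i\le d$ and $0\le j\le d$, $$|T_{h_{\max}}(i,j)|-|T_{h_{\max}-1}(i,j)|\le |G_j(i)|\le |T_{h_{\max}}(i,j)|,$$ where $h_{\max}=h_{\max}(i,j)=\min\{i,d-j\}$.
   Context: For integers $m\ge 0$ and $l$, the Gaussian coefficient is ${m\brack l}=\prod_{t=1}^{l}\frac{q^{m-t+1}-1}{q^t-1}$ for $l\ge 0$ (this is $0$ if $l>m$) and ${m\brack l}=0$ for $l<0$. For $0\le i,j\le d$ define $$G_j(i)=\sum_{h=\max\{0,i-j\}}^{\min\{i,d-j\}}(-1)^{i-h}q^{j(j-i+h)+\binom{i-h}{2}}{i\brack h}{d-h\brack j}{n-d-i+h\brack n-d-j};$$ these are the eigenvalues of the Grassmann graph $G_q(n,d,j)$ (vertices: $d$-dimensional subspaces of $\mathbb F_q^n$, two adjacent iff their intersection has dimension $d-j$). For $\max\{0,i-j\}\le h\le \min\{i,d-j\}$, $T_h(i,j)$ denotes the $h$-th summand above; for all other integers $h$ (in particular $h=-1$) set $T_h(i,j)=0$. *)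

theory Defs
  imports Complex_Main "HOL-Computational_Algebra.Primes"
begin

definition gauss :: "real \<Rightarrow> int \<Rightarrow> int \<Rightarrow> real" where
  "gauss q m l = (if l < 0 then 0 else
     (\<Prod>t\<in>{1..l}. (q powi (m - t + 1) - 1) / (q powi t - 1)))"

definition Tsum :: "real \<Rightarrow> int \<Rightarrow> int \<Rightarrow> int \<Rightarrow> int \<Rightarrow> int \<Rightarrow> real" where
  "Tsum q n d i j h =
     (if max 0 (i - j) \<le> h \<and> h \<le> min i (d - j) then
        (-1) ^ nat (i - h) * q ^ nat (j * (j - i + h) + int (nat (i - h) choose 2))
        * gauss q i h * gauss q (d - h) j * gauss q (n - d - i + h) (n - d - j)
      else 0)"

text \<open>Eigenvalue G_j(i) of the Grassmann graph G_q(n,d,j).\<close>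
definition Geig :: "real \<Rightarrow> int \<Rightarrow> int \<Rightarrow> int \<Rightarrow> int \<Rightarrow> real" where
  "Geig q n d i j = (\<Sum>h\<in>{max 0 (i - j)..min i (d - j)}. Tsum q n d i j h)"

end

theory Submission
  imports Defs
begin

text \<open>
  On the summation range, consecutive summands have opposite signs and the ratio
  \<open>T\<^sub>h(i,j) / T\<^sub>h\<^sub>-\<^sub>1(i,j)\<close> is minus
  \<open>q\<^sup>a [x][y][z] / ([h][d-h+1][a])\<close>, writing \<open>[k] = q\<^sup>k - 1\<close>,
  \<open>a = j-i+h\<close>, \<open>x = i-h+1\<close>, \<open>y = d-h+1-j\<close>, \<open>z = n-d-i+h\<close>.
  Since \<open>z \<ge> h + y + a - 1\<close>, with one to spare unless \<open>n = 2d\<close>, and \<open>q \<ge> 2\<close>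
  (\<open>q \<ge> 3\<close> if \<open>n = 2d\<close>), this ratio has absolute value at least 1.
  An alternating sum of terms of non-decreasing absolute value is dominated by its
  last term, and differs from it by at most the second-to-last one.
\<close>

definition qpow_minus_one :: "real \<Rightarrow> int \<Rightarrow> real" where
  "qpow_minus_one q k = q powi k - 1"

lemma qpow_minus_one_nat: "k \<ge> 0 \<Longrightarrow> qpow_minus_one q k = q ^ nat k - 1"
  unfolding qpow_minus_one_def by (metis int_nat_eq power_int_of_nat)

lemma qpow_minus_one_pos: "q > 1 \<Longrightarrow> k \<ge> 1 \<Longrightarrow> qpow_minus_one q k > 0"
  by (simp add: qpow_minus_one_nat one_less_power)

lemma gauss_0 [simp]: "gauss q m 0 = 1"
  by (simp add: gauss_def)

lemma gauss_plus_one_lower: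
  assumes "l \<ge> 0"
  shows "gauss q m (l + 1) = gauss q m l * qpow_minus_one q (m - l) / qpow_minus_one q (l + 1)"
proof -
  have "{1..l + 1} = insert (l + 1) {1..l}"
    using assms by auto
  then show ?thesis
    using assms unfolding gauss_def qpow_minus_one_def by (simp add: algebra_simps)
qed

lemma gauss_plus_one_upper:
  assumes "l \<ge> 0" and "q > 1"
  shows "gauss q (m + 1) l * qpow_minus_one q (m + 1 - l) = gauss q m l * qpow_minus_one q (m + 1)"
  using assms(1)
proof (induction l rule: int_ge_induct)
  case base
  then show ?case by simp
next
  case (step l)
  have "qpow_minus_one q (l + 1) * (gauss q (m + 1) (l + 1) * qpow_minus_one q (m - l))
      = gauss q (m + 1) l * qpow_minus_one q (m + 1 - l) * qpow_minus_one q (m - l)"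
    using gauss_plus_one_lower[OF step(1), of q "m + 1"] qpow_minus_one_pos[OF assms(2), of "l + 1"] step(1)
    by (simp add: algebra_simps)
  also have "\<dots> = qpow_minus_one q (l + 1) * (gauss q m (l + 1) * qpow_minus_one q (m + 1))"
    using step(2) gauss_plus_one_lower[OF step(1), of q m] qpow_minus_one_pos[OF assms(2), of "l + 1"] step(1)
    by (simp add: algebra_simps)
  finally show ?case
    using qpow_minus_one_pos[OF assms(2), of "l + 1"] step(1) by simp
qed

lemma qpow_le_mult_qpow_pred:
  fixes q :: real and x y e :: nat
  assumes q: "q \<ge> 2" and "x \<ge> 1" and "y \<ge> 1" and e: "e = 1 \<or> q \<ge> 3"
  shows "q ^ x \<le> q ^ e * (q ^ x - 1) * (q ^ y - 1)"
proof -
  have qx: "q ^ x \<ge> q" and qy: "q ^ y \<ge> q"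
    using assms power_increasing[of 1 _ q] by auto
  from e show ?thesis
  proof
    assume "e = 1"
    have "q ^ x \<le> q * (q ^ x - 1)"
      using mult_mono[OF qx, of 1 "q - 1"] q by (simp add: algebra_simps)
    also have "\<dots> \<le> q * (q ^ x - 1) * (q ^ y - 1)"
      using q qx qy mult_left_mono[of 1 "q ^ y - 1" "q * (q ^ x - 1)"] by simp
    finally show ?thesis
      using \<open>e = 1\<close> by simp
  next
    assume q3: "q \<ge> 3"
    have "q ^ x \<le> (q ^ x - 1) * 2"
      using qx q by simp
    also have "\<dots> \<le> (q ^ x - 1) * (q ^ y - 1)"
      using qx qy q3 by (intro mult_left_mono) auto
    also have "\<dots> \<le> q ^ e * ((q ^ x - 1) * (q ^ y - 1))"
      using qx qy q3 one_le_power[of q e] mult_right_mono[of 1 "q ^ e"] by simp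
    finally show ?thesis
      by (simp add: mult.assoc)
  qed
qed

lemma qpow_pred_product_le:
  fixes q :: real and h a x y z e :: nat
  assumes q: "q \<ge> 2" and "a \<ge> 1" and "x \<ge> 1" and "y \<ge> 1"
    and z: "z \<ge> h + (y + a - 1) + e" and e: "e = 1 \<or> q \<ge> 3"
  shows "(q ^ h - 1) * (q ^ (x + y + a - 1) - 1) * (q ^ a - 1)
           \<le> q ^ a * (q ^ x - 1) * (q ^ y - 1) * (q ^ z - 1)"
proof -
  define s where "s = y + a - 1"
  have pos: "q ^ h - 1 \<ge> 0" "q ^ x - 1 \<ge> 0" "q ^ y - 1 \<ge> 0" "q ^ (x + s) - 1 \<ge> 0"
    using q by simp_all
  have "q ^ s * q ^ x \<le> q ^ s * (q ^ e * (q ^ x - 1) * (q ^ y - 1))"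
    using qpow_le_mult_qpow_pred[OF assms(1,3,4) e] q by (intro mult_left_mono) auto
  then have "q ^ (x + s) - 1 \<le> q ^ s * (q ^ e * (q ^ x - 1) * (q ^ y - 1))"
    by (simp add: power_add mult.commute)
  then have "(q ^ h - 1) * (q ^ (x + s) - 1) \<le> (q ^ h - 1) * (q ^ s * (q ^ e * (q ^ x - 1) * (q ^ y - 1)))"
    using pos(1) by (rule mult_left_mono)
  also have "\<dots> = (q ^ h - 1) * q ^ (s + e) * (q ^ x - 1) * (q ^ y - 1)"
    by (simp add: power_add mult.assoc)
  also have "(q ^ h - 1) * q ^ (s + e) \<le> q ^ z - 1"
  proof -
    have "q ^ (h + s + e) \<le> q ^ z"
      using q z s_def by (intro power_increasing) auto
    moreover have "q ^ (s + e) \<ge> 1"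
      using q by simp
    ultimately show ?thesis
      by (simp add: algebra_simps power_add)
  qed
  then have "(q ^ h - 1) * q ^ (s + e) * (q ^ x - 1) * (q ^ y - 1) \<le> (q ^ z - 1) * (q ^ x - 1) * (q ^ y - 1)"
    using pos by (intro mult_right_mono) auto
  finally have "(q ^ h - 1) * (q ^ (x + s) - 1) * (q ^ a - 1) \<le> (q ^ z - 1) * (q ^ x - 1) * (q ^ y - 1) * q ^ a"
    by (rule mult_mono) (use pos q in auto)
  then show ?thesis
    unfolding s_def using assms by (simp add: algebra_simps)
qed

lemma Tsum_recurrence:
  fixes q :: real and n d i j h :: int
  defines "A \<equiv> qpow_minus_one q"
  assumes q: "q > 1" and j: "0 \<le> j" "j \<le> n - d"
    and h: "max 0 (i - j) < h" "h \<le> min i (d - j)"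
  shows "Tsum q n d i j h * (A h * A (d - h + 1) * A (j - i + h))
       = - Tsum q n d i j (h - 1) * (q ^ nat (j - i + h) * A (i - h + 1) * A (d - h + 1 - j) * A (n - d - i + h))"
proof -
  define a where "a = j - i + h"
  define z where "z = n - d - i + h"
  define u where "u = nat (i - h)"
  define E where "E = j * (j - i + (h - 1)) + int (Suc u choose 2)"
  have u: "int u = i - h" "nat (i - (h - 1)) = Suc u"
    using h unfolding u_def by auto
  have "Suc u choose 2 = (u choose 2) + u"
    by (simp add: numeral_2_eq_2)
  then have "j * (j - i + h) + int (u choose 2) = E + a"
    using u unfolding E_def a_def by (simp add: algebra_simps)
  moreover have "E \<ge> 0" "a \<ge> 0"
    using h j unfolding E_def a_def by auto
  ultimately have exponent: "nat (j * (j - i + h) + int (u choose 2)) = nat E + nat a"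
    by (simp add: nat_add_distrib)
  define s where "s = (-1::real) ^ u"
  have T_h: "Tsum q n d i j h
      = s * q ^ nat E * q ^ nat a * gauss q i h * gauss q (d - h) j * gauss q z (n - d - j)"
    unfolding Tsum_def s_def u_def z_def using h exponent u_def by (simp add: power_add)
  have T_pred: "Tsum q n d i j (h - 1)
      = - s * q ^ nat E * gauss q i (h - 1) * gauss q (d - h + 1) j * gauss q (z - 1) (n - d - j)"
  proof -
    have "max 0 (i - j) \<le> h - 1 \<and> h - 1 \<le> min i (d - j)"
      using h by auto
    then show ?thesis
      unfolding Tsum_def s_def E_def z_def using u(2) by (simp add: algebra_simps)
  qed
  have g_i: "gauss q i h * A h = gauss q i (h - 1) * A (i - h + 1)"
    using gauss_plus_one_lower[of "h - 1" q i] qpow_minus_one_pos[OF q, of h] h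
    unfolding A_def by (simp add: algebra_simps)
  have g_d: "gauss q (d - h) j * A (d - h + 1) = gauss q (d - h + 1) j * A (d - h + 1 - j)"
    using gauss_plus_one_upper[OF j(1) q, of "d - h"] unfolding A_def by (simp add: algebra_simps)
  have g_z: "gauss q z (n - d - j) * A a = gauss q (z - 1) (n - d - j) * A z"
    using gauss_plus_one_upper[of "n - d - j" q "z - 1"] j q
    unfolding A_def a_def z_def by (simp add: algebra_simps)
  have "Tsum q n d i j h * (A h * A (d - h + 1) * A a)
      = s * q ^ nat E * q ^ nat a * (gauss q i h * A h) * (gauss q (d - h) j * A (d - h + 1))
          * (gauss q z (n - d - j) * A a)"
    unfolding T_h by (simp add: algebra_simps)
  also have "\<dots> = - Tsum q n d i j (h - 1) * (q ^ nat a * A (i - h + 1) * A (d - h + 1 - j) * A z)"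
    unfolding g_i g_d g_z T_pred by (simp add: algebra_simps)
  finally show ?thesis
    unfolding a_def z_def .
qed

lemma Tsum_consecutive_ratio:
  fixes q :: real and n d i j h :: int
  assumes q: "q \<ge> 2" and n: "n \<ge> 2 * d" and spare: "n \<ge> 2 * d + 1 \<or> q \<ge> 3"
    and h: "max 0 (i - j) < h" "h \<le> min i (d - j)"
  shows "\<exists>c\<ge>1. Tsum q n d i j h = - c * Tsum q n d i j (h - 1)"
proof -
  define A where "A = qpow_minus_one q"
  define a where "a = j - i + h"
  define x where "x = i - h + 1"
  define y where "y = d - h + 1 - j"
  define z where "z = n - d - i + h"
  define e :: nat where "e = (if n \<ge> 2 * d + 1 then 1 else 0)"
  have pos: "h \<ge> 1" "a \<ge> 1" "x \<ge> 1" "y \<ge> 1" "z \<ge> 1" "d - h + 1 \<ge> 1"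
    using h n unfolding a_def x_def y_def z_def by auto
  define D where "D = A h * A (d - h + 1) * A a"
  define N where "N = q ^ nat a * A x * A y * A z"
  have D_pos: "D > 0"
    using pos qpow_minus_one_pos[of q] q unfolding D_def A_def by simp
  have "Tsum q n d i j h * D = - Tsum q n d i j (h - 1) * N"
    using Tsum_recurrence[of q j n d i h] q h n
    unfolding D_def N_def A_def a_def x_def y_def z_def by (simp add: algebra_simps)
  then have ratio: "Tsum q n d i j h = - (N / D) * Tsum q n d i j (h - 1)"
    using D_pos by (simp add: field_simps)
  have "(q ^ nat h - 1) * (q ^ (nat x + nat y + nat a - 1) - 1) * (q ^ nat a - 1)
      \<le> q ^ nat a * (q ^ nat x - 1) * (q ^ nat y - 1) * (q ^ nat z - 1)"
    using pos n spare unfolding z_def y_def a_def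
    by (intro qpow_pred_product_le[OF q, where e = e]) (auto simp: e_def)
  moreover have "nat x + nat y + nat a - 1 = nat (d - h + 1)"
    using pos unfolding x_def y_def a_def by auto
  ultimately have "D \<le> N"
    using pos unfolding D_def N_def A_def by (simp add: qpow_minus_one_nat)
  with ratio D_pos show ?thesis
    by (intro exI[of _ "N / D"]) simp
qed

lemma alternating_sum_eq_scaled_last:
  fixes f :: "int \<Rightarrow> real"
  assumes "lo \<le> hi" and "\<And>h. lo < h \<Longrightarrow> h \<le> hi \<Longrightarrow> \<exists>c\<ge>1. f h = - c * f (h - 1)"
  shows "\<exists>\<theta>. 0 \<le> \<theta> \<and> \<theta> \<le> 1 \<and> sum f {lo..hi} = \<theta> * f hi"
  using assms
proof (induction hi rule: int_ge_induct)
  case base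
  then show ?case by (intro exI[of _ 1]) simp
next
  case (step k)
  obtain \<theta> where \<theta>: "0 \<le> \<theta>" "\<theta> \<le> 1" "sum f {lo..k} = \<theta> * f k"
    using step by force
  obtain c where c: "c \<ge> 1" "f (k + 1) = - c * f k"
    using step(3)[of "k + 1"] step(1) by auto
  have "{lo..k + 1} = insert (k + 1) {lo..k}"
    using step(1) by auto
  then have "sum f {lo..k + 1} = f (k + 1) + \<theta> * f k"
    using \<theta> by simp
  also have "\<dots> = (1 - \<theta> / c) * f (k + 1)"
    using c by (simp add: field_simps)
  finally show ?case
    using \<theta> c by (intro exI[of _ "1 - \<theta> / c"]) (auto simp: field_simps)
qed

lemma alternating_sum_bounds:
  fixes f :: "int \<Rightarrow> real"
  assumes "lo \<le> hi" and step: "\<And>h. lo < h \<Longrightarrow> h \<le> hi \<Longrightarrow> \<exists>c\<ge>1. f h = - c * f (h - 1)"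
  shows "\<bar>f hi\<bar> - \<bar>f (hi - 1)\<bar> \<le> \<bar>sum f {lo..hi}\<bar> \<and> \<bar>sum f {lo..hi}\<bar> \<le> \<bar>f hi\<bar>"
proof
  obtain \<theta> where "0 \<le> \<theta>" "\<theta> \<le> 1" "sum f {lo..hi} = \<theta> * f hi"
    using alternating_sum_eq_scaled_last[of lo hi f, OF assms] by blast
  then show "\<bar>sum f {lo..hi}\<bar> \<le> \<bar>f hi\<bar>"
    by (simp add: abs_mult mult_left_le_one_le)
next
  show "\<bar>f hi\<bar> - \<bar>f (hi - 1)\<bar> \<le> \<bar>sum f {lo..hi}\<bar>"
  proof (cases "lo = hi")
    case False
    then obtain \<theta> where \<theta>: "0 \<le> \<theta>" "\<theta> \<le> 1" "sum f {lo..hi - 1} = \<theta> * f (hi - 1)"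
      using alternating_sum_eq_scaled_last[of lo "hi - 1" f] assms by force
    have "{lo..hi} = insert hi {lo..hi - 1}"
      using assms(1) by auto
    then have "sum f {lo..hi} = f hi + \<theta> * f (hi - 1)"
      using \<theta>(3) by simp
    moreover have "\<bar>\<theta> * f (hi - 1)\<bar> \<le> \<bar>f (hi - 1)\<bar>"
      using \<theta> by (simp add: abs_mult mult_left_le_one_le)
    ultimately show ?thesis
      by linarith
  qed simp
qed

lemma prime_power_ge_2:
  fixes q :: nat
  assumes "prime p" and "k \<ge> 1" and "q = p ^ k"
  shows "q \<ge> 2"
  using assms prime_ge_2_nat[of p] power_increasing[of 1 k p] by auto

theorem lemma3p1:
  fixes q :: nat and n d i j :: int
  assumes "\<exists>p k. prime p \<and> k \<ge> 1 \<and> q = p ^ k"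
    and "n \<ge> 2 * d" and "2 * d \<ge> 2"
    and "(n, q) \<noteq> (2 * d, 2)"
    and "0 \<le> i" and "i \<le> d" and "0 \<le> j" and "j \<le> d"
  shows "\<bar>Tsum (real q) n d i j (min i (d - j))\<bar> - \<bar>Tsum (real q) n d i j (min i (d - j) - 1)\<bar>
           \<le> \<bar>Geig (real q) n d i j\<bar>
       \<and> \<bar>Geig (real q) n d i j\<bar> \<le> \<bar>Tsum (real q) n d i j (min i (d - j))\<bar>"
proof -
  have q: "q \<ge> 2"
    using assms(1) prime_power_ge_2 by blast
  with assms(2,4) have "n \<ge> 2 * d + 1 \<or> real q \<ge> 3"
    by (cases "n = 2 * d") auto
  then have "\<And>h. max 0 (i - j) < h \<Longrightarrow> h \<le> min i (d - j)
      \<Longrightarrow> \<exists>c\<ge>1. Tsum q n d i j h = - c * Tsum q n d i j (h - 1)"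
    using q assms(2) by (intro Tsum_consecutive_ratio) auto
  moreover have "max 0 (i - j) \<le> min i (d - j)"
    using assms by auto
  ultimately show ?thesis
    unfolding Geig_def using alternating_sum_bounds by blast
qed

end
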